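(* Let $k\ge1$ and $x\ge0$ be integers, and let $a_1,a_2,\dots,a_{2^k+x}$ be (not necessarily distinct) integers. Then at least one of the following holds: (1) there is a subset $I\subseteq\{1,\dots,2^k+x\}$ such that $\sum_{i\in I}a_i$ is divisible by $2^k$ but not by $2^{k+1}$; (2) there exist $x+1$ pairwise disjoint non-empty sets $A_1,\dots,A_{x+1}\subseteq\{1,\dots,2^k+x\}$ such that $\sum_{i\in A_s}a_i\equiv 0\pmod{2^{k+1}}$ for every $s\le x+1$. *)

theory Defs
  imports Main
begin

end

theory Submission
  imports Defs
begin

(* Adjoin a_0 = -(a_1 + ... + a_n), so that the index set {0..n} has zero sum, and work with
   subset sums modulo N = 2^(k+1).  If no subset sum of a_1, ..., a_n is congruent to M = 2^k, the
   same holds for the augmented family, because a set containing 0 has the negated sum of its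
   complement and -M = M.  Since every nonzero subgroup of Z/N contains M, Dyson's e-transform
   gives the Cauchy-Davenport bound |A + B| >= |A| + |B| - 1 whenever M is not in A + B.  Split
   {0..n} repeatedly into two zero-sum parts until the parts are minimal zero-sum blocks.  A block Q
   has at least 2|Q| - 1 subset sums, because the differences of its |Q| distinct prefix sums are
   subset sums.  Together with the bound for the splits this gives
   2(n+1) + 1 <= #(subset sums) + 2 #blocks <= N - 1 + 2 #blocks, so for n = 2^k + x there are at
   least x + 2 blocks, and at most one of them contains the index 0. *)

lemma mod_two_power_Suc_eq_iff:
  fixes s :: int
  shows "s mod 2^(k+1) = 2^k \<longleftrightarrow> 2^k dvd s \<and> \<not> 2^(k+1) dvd s"
proof
  assume eq: "s mod 2^(k+1) = 2^k"
  have "(2::int)^k dvd 2^(k+1)" by (simp add: le_imp_power_dvd)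
  then have "2^k dvd s \<longleftrightarrow> 2^k dvd s mod 2^(k+1)" by (simp add: dvd_mod_iff)
  with eq show "2^k dvd s \<and> \<not> 2^(k+1) dvd s" by auto
next
  assume dvd: "2^k dvd s \<and> \<not> 2^(k+1) dvd s"
  then obtain t where s: "s = t * 2^k" by (auto simp: mult.commute)
  with dvd have "odd t" by auto
  have "s mod 2^(k+1) = (t mod 2) * 2^k" unfolding s by (simp add: mod_mult_mult2)
  with \<open>odd t\<close> show "s mod 2^(k+1) = 2^k" by (simp add: odd_iff_mod_2_eq_one)
qed

lemma two_power_times_odd_mod:
  fixes b :: int
  assumes "odd b"
  shows "(2^k * b) mod 2^(k+1) = 2^k"
proof -
  have "(b * 2^k) mod (2 * 2^k) = (b mod 2) * 2^k" by (rule mod_mult_mult2)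
  with assms show ?thesis by (simp add: mult.commute odd_iff_mod_2_eq_one)
qed

lemma two_power_multiple_mod_eq:
  fixes b :: int
  assumes "0 < b" "b < 2^(k+1)"
  shows "\<exists>j::nat. (int j * b) mod 2^(k+1) = 2^k"
  using assms
proof (induction k arbitrary: b)
  case 0
  then show ?case by (intro exI[of _ 1]) simp
next
  case (Suc k)
  show ?case
  proof (cases "odd b")
    case True
    then have "(int (2^Suc k) * b) mod 2^(Suc k + 1) = 2^Suc k"
      unfolding of_nat_power of_nat_numeral by (rule two_power_times_odd_mod)
    then show ?thesis by blast
  next
    case False
    then obtain c where b: "b = c * 2" by (auto simp: mult.commute)
    with Suc.prems have "0 < c" "c < 2^(k+1)" by simp_all
    then obtain j :: nat where "(int j * c) mod 2^(k+1) = 2^k" using Suc.IH by blast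
    moreover have "(int j * b) mod (2^(k+1) * 2) = ((int j * c) mod 2^(k+1)) * 2"
      unfolding b mult.assoc[symmetric] by (rule mod_mult_mult2)
    ultimately have "(int j * b) mod 2^(Suc k + 1) = 2^Suc k" by simp
    then show ?thesis by blast
  qed
qed

lemma neg_two_power_mod: "(- ((2::int)^k)) mod 2^(k+1) = 2^k"
  using two_power_times_odd_mod[of "-1" k] by simp

lemma inj_on_add_mod: "inj_on (\<lambda>x::int. (x + e) mod N) {0..<N}"
proof (rule inj_onI)
  fix x y assume "x \<in> {0..<N}" "y \<in> {0..<N}" and "(x + e) mod N = (y + e) mod N"
  then have "((x + e) - e) mod N = ((y + e) - e) mod N" by (metis mod_diff_left_eq)
  with \<open>x \<in> {0..<N}\<close> \<open>y \<in> {0..<N}\<close> show "x = y" by simp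
qed

lemma inj_on_uminus_mod: "inj_on (\<lambda>x::int. (- x) mod N) {0..<N}"
proof (rule inj_onI)
  fix x y assume "x \<in> {0..<N}" "y \<in> {0..<N}" and "(- x) mod N = (- y) mod N"
  then have "(- (- x)) mod N = (- (- y)) mod N" by (metis mod_minus_eq)
  with \<open>x \<in> {0..<N}\<close> \<open>y \<in> {0..<N}\<close> show "x = y" by simp
qed

lemma card_le_Suc_card_not_containing:
  assumes "finite PP" "pairwise disjnt PP"
  shows "card PP \<le> Suc (card {Q \<in> PP. x \<notin> Q})"
proof -
  have "card {Q \<in> PP. x \<in> Q} \<le> Suc 0"
    using assms by (subst card_le_Suc0_iff_eq) (auto simp: pairwise_def disjnt_def)
  moreover have "PP = {Q \<in> PP. x \<notin> Q} \<union> {Q \<in> PP. x \<in> Q}" by blast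
  then have "card PP \<le> card {Q \<in> PP. x \<notin> Q} + card {Q \<in> PP. x \<in> Q}" by (metis card_Un_le)
  ultimately show ?thesis by linarith
qed

lemma ex_disjoint_enumeration:
  assumes "m \<le> card PP" "finite PP" "pairwise disjnt PP"
  shows "\<exists>A. A ` {1..m} \<subseteq> PP \<and> (\<forall>s\<in>{1..m}. \<forall>t\<in>{1..m}. s \<noteq> t \<longrightarrow> A s \<inter> A t = {})"
proof -
  obtain T where T: "T \<subseteq> PP" "card T = m" "finite T" using obtain_subset_with_card_n[OF assms(1)] .
  obtain A where "bij_betw A {1..card T} T" using ex_bij_betw_nat_finite_1[OF T(3)] ..
  then have A: "bij_betw A {1..m} T" using T(2) by simp
  have "A s \<inter> A t = {}" if "s \<in> {1..m}" "t \<in> {1..m}" "s \<noteq> t" for s t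
  proof -
    have "A s \<in> PP" "A t \<in> PP" "A s \<noteq> A t"
      using A T(1) that by (auto simp: bij_betw_def dest: inj_onD)
    with assms(3) have "disjnt (A s) (A t)" by (simp add: pairwiseD)
    then show ?thesis by (simp add: disjnt_def)
  qed
  moreover have "A ` {1..m} \<subseteq> PP" using A T(1) by (auto simp: bij_betw_def)
  ultimately show ?thesis by (intro exI[of _ A]) blast
qed

lemma sum_Diff_mod_eq_zero:
  fixes f :: "'a \<Rightarrow> int"
  assumes "finite J" "sum f J mod N = 0" "U \<subseteq> J" "sum f U mod N = 0"
  shows "sum f (J - U) mod N = 0"
proof -
  have "sum f (J - U) = sum f J - sum f U" using sum.subset_diff[OF assms(3,1), of f] by simp
  also have "\<dots> mod N = (sum f J mod N - sum f U mod N) mod N" by (simp add: mod_diff_eq)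
  finally show ?thesis using assms(2,4) by simp
qed

lemma card_set_take_diff:
  assumes "distinct xs" "j \<le> j'" "j' \<le> length xs"
  shows "card (set (take j' xs) - set (take j xs)) = j' - j"
  using assms set_take_subset_set_take[OF assms(2), of xs]
  by (simp add: card_Diff_subset distinct_card)

lemma sum_set_take_diff_mod:
  fixes f :: "'a \<Rightarrow> int"
  assumes "j \<le> j'"
  shows "(sum f (set (take j' xs)) mod N - sum f (set (take j xs)) mod N) mod N
    = sum f (set (take j' xs) - set (take j xs)) mod N"
proof -
  have "sum f (set (take j' xs)) = sum f (set (take j xs)) + sum f (set (take j' xs) - set (take j xs))"
    using sum.subset_diff[OF set_take_subset_set_take[OF assms, of xs], of f] by (simp add: add.commute)
  then show ?thesis by (simp add: mod_simps)
qed

(* Residues modulo N are represented by their canonical representatives in {0..<N}.  The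
   assumption says that M lies in every nonzero subgroup of Z/N; for N = 2^(k+1) this holds for
   M = 2^k, see socle_residue_two_power below. *)
locale socle_residue =
  fixes N M :: int
  assumes modulus_pos: "0 < N"
    and multiple_eq: "\<And>b. 0 < b \<Longrightarrow> b < N \<Longrightarrow> \<exists>j::nat. (int j * b) mod N = M"
begin

definition sumset :: "int set \<Rightarrow> int set \<Rightarrow> int set" where
  "sumset A B = (\<lambda>(a, b). (a + b) mod N) ` (A \<times> B)"

definition subset_sums :: "('a \<Rightarrow> int) \<Rightarrow> 'a set \<Rightarrow> int set" where
  "subset_sums f J = (\<lambda>U. sum f U mod N) ` Pow J"

definition zero_sum_blocks :: "('a \<Rightarrow> int) \<Rightarrow> 'a set \<Rightarrow> 'a set set \<Rightarrow> bool" where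
  "zero_sum_blocks f J PP \<longleftrightarrow>
     PP \<subseteq> Pow J \<and> pairwise disjnt PP \<and> (\<forall>Q\<in>PP. Q \<noteq> {} \<and> sum f Q mod N = 0)"

lemma sumset_subset: "sumset A B \<subseteq> {0..<N}"
  using modulus_pos unfolding sumset_def by auto

lemma finite_sumset: "finite (sumset A B)"
  using sumset_subset by (rule finite_subset) simp

lemma closed_under_add_mod_contains_M:
  assumes "0 \<in> A" "0 < b" "b < N" and closed: "\<And>a. a \<in> A \<Longrightarrow> (a + b) mod N \<in> A"
  shows "M \<in> A"
proof -
  have multiple: "(int j * b) mod N \<in> A" for j
  proof (induction j)
    case 0
    then show ?case using \<open>0 \<in> A\<close> by simp
  next
    case (Suc j)
    then have "((int j * b) mod N + b) mod N \<in> A" by (rule closed)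
    then show ?case by (simp add: mod_simps algebra_simps)
  qed
  from multiple_eq[OF \<open>0 < b\<close> \<open>b < N\<close>] multiple show ?thesis by metis
qed

lemma Dyson_transform_sumset_subset:
  "sumset (A \<union> (\<lambda>b. (b + e) mod N) ` B) {b \<in> B. (b + e) mod N \<in> A} \<subseteq> sumset A B"
proof
  fix z assume "z \<in> sumset (A \<union> (\<lambda>b. (b + e) mod N) ` B) {b \<in> B. (b + e) mod N \<in> A}"
  then obtain a b where a: "a \<in> A \<union> (\<lambda>b. (b + e) mod N) ` B"
    and b: "b \<in> B" "(b + e) mod N \<in> A" and z: "z = (a + b) mod N"
    unfolding sumset_def by auto
  from a show "z \<in> sumset A B"
  proof
    assume "a \<in> A"
    with b z show ?thesis unfolding sumset_def by force
  next
    assume "a \<in> (\<lambda>b. (b + e) mod N) ` B"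
    then obtain c where "c \<in> B" "a = (c + e) mod N" by blast
    with z have "z = ((b + e) mod N + c) mod N" by (simp add: mod_simps algebra_simps)
    with b \<open>c \<in> B\<close> show ?thesis unfolding sumset_def by force
  qed
qed

lemma card_Dyson_transform:
  assumes "finite A" "finite B" "B \<subseteq> {0..<N}"
  shows "card (A \<union> (\<lambda>b. (b + e) mod N) ` B) + card {b \<in> B. (b + e) mod N \<in> A}
    = card A + card B"
proof -
  let ?g = "\<lambda>b. (b + e) mod N"
  have inj: "inj_on ?g B" using inj_on_add_mod assms(3) by (rule inj_on_subset)
  have "A \<inter> ?g ` B = ?g ` {b \<in> B. ?g b \<in> A}" by auto
  then have "card (A \<inter> ?g ` B) = card {b \<in> B. ?g b \<in> A}"
    using inj by (simp add: card_image inj_on_subset)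
  moreover have "card (?g ` B) = card B" using inj by (rule card_image)
  moreover have "card A + card (?g ` B) = card (A \<union> ?g ` B) + card (A \<inter> ?g ` B)"
    using assms(1,2) by (intro card_Un_Int) auto
  ultimately show ?thesis by simp
qed

lemma card_sumset_ge:
  assumes "finite B" "A \<subseteq> {0..<N}" "B \<subseteq> {0..<N}" "0 \<in> A" "0 \<in> B" "M \<notin> sumset A B"
  shows "card A + card B \<le> card (sumset A B) + 1"
  using assms
proof (induction "card B" arbitrary: A B rule: less_induct)
  case less
  have "finite A" using less.prems(2) by (rule finite_subset) simp
  show ?case
  proof (cases "B = {0}")
    case True
    have "sumset A B = A" using less.prems(2) unfolding True sumset_def by force
    then show ?thesis using True by simp
  next
    case False
    with less.prems(5) obtain b where b: "b \<in> B" "b \<noteq> 0" by auto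
    have "\<exists>e\<in>A. \<exists>c\<in>B. (c + e) mod N \<notin> A"
    proof (rule ccontr)
      assume "\<not> ?thesis"
      then have "M \<in> A"
        using closed_under_add_mod_contains_M[of A b] b less.prems(3,4) by (auto simp: add.commute)
      then have "M \<in> sumset A B" using less.prems(2,5) unfolding sumset_def by force
      with less.prems(6) show False ..
    qed
    then obtain e c where e: "e \<in> A" and c: "c \<in> B" "(c + e) mod N \<notin> A" by blast
    let ?A' = "A \<union> (\<lambda>b. (b + e) mod N) ` B" and ?B' = "{b \<in> B. (b + e) mod N \<in> A}"
    have "card ?B' < card B" using c less.prems(1) by (intro psubset_card_mono) auto
    moreover have "?A' \<subseteq> {0..<N}" using less.prems(2) modulus_pos by auto
    moreover have "0 \<in> ?B'" using e less.prems(2,5) by auto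
    moreover have "M \<notin> sumset ?A' ?B'" using Dyson_transform_sumset_subset less.prems(6) by blast
    ultimately have "card ?A' + card ?B' \<le> card (sumset ?A' ?B') + 1"
      using less.prems(1,3,4) by (intro less.hyps) auto
    also have "card (sumset ?A' ?B') \<le> card (sumset A B)"
      by (intro card_mono finite_sumset Dyson_transform_sumset_subset)
    finally show ?thesis using card_Dyson_transform[OF \<open>finite A\<close> less.prems(1,3)] by simp
  qed
qed

lemma subset_sums_subset: "subset_sums f J \<subseteq> {0..<N}"
  using modulus_pos unfolding subset_sums_def by auto

lemma finite_subset_sums: "finite (subset_sums f J)"
  using subset_sums_subset by (rule finite_subset) simp

lemma zero_in_subset_sums: "0 \<in> subset_sums f J"
  unfolding subset_sums_def by (rule image_eqI[of _ _ "{}"]) auto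

lemma subset_sums_mono: "J \<subseteq> K \<Longrightarrow> subset_sums f J \<subseteq> subset_sums f K"
  unfolding subset_sums_def by auto

lemma subset_sums_Un:
  assumes "finite J" "finite K" "J \<inter> K = {}"
  shows "subset_sums f (J \<union> K) = sumset (subset_sums f J) (subset_sums f K)"
proof
  show "subset_sums f (J \<union> K) \<subseteq> sumset (subset_sums f J) (subset_sums f K)"
  proof
    fix z assume "z \<in> subset_sums f (J \<union> K)"
    then obtain U where U: "U \<subseteq> J \<union> K" "z = sum f U mod N" unfolding subset_sums_def by auto
    have "U = (U \<inter> J) \<union> (U \<inter> K)" "(U \<inter> J) \<inter> (U \<inter> K) = {}" using U(1) assms(3) by auto
    then have "sum f U = sum f (U \<inter> J) + sum f (U \<inter> K)"
      using assms(1,2) by (metis finite_Int sum.union_disjoint)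
    then have "z = (sum f (U \<inter> J) mod N + sum f (U \<inter> K) mod N) mod N"
      using U(2) by (simp add: mod_simps)
    then show "z \<in> sumset (subset_sums f J) (subset_sums f K)"
      unfolding sumset_def subset_sums_def by force
  qed
next
  show "sumset (subset_sums f J) (subset_sums f K) \<subseteq> subset_sums f (J \<union> K)"
  proof
    fix z assume "z \<in> sumset (subset_sums f J) (subset_sums f K)"
    then obtain U V where UV: "U \<subseteq> J" "V \<subseteq> K" "z = (sum f U mod N + sum f V mod N) mod N"
      unfolding sumset_def subset_sums_def by auto
    moreover have "finite U" "finite V" using UV(1,2) assms(1,2) by (auto dest: finite_subset)
    ultimately have "sum f (U \<union> V) = sum f U + sum f V"
      using assms(3) by (intro sum.union_disjoint) auto
    with UV have "z = sum f (U \<union> V) mod N" by (simp add: mod_simps)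
    with UV(1,2) show "z \<in> subset_sums f (J \<union> K)" unfolding subset_sums_def by blast
  qed
qed

lemma uminus_mod_in_subset_sums:
  assumes "finite J" "sum f J mod N = 0" "s \<in> subset_sums f J"
  shows "(- s) mod N \<in> subset_sums f J"
proof -
  obtain U where U: "U \<subseteq> J" "s = sum f U mod N" using assms(3) unfolding subset_sums_def by blast
  have "sum f J = sum f (J - U) + sum f U" using sum.subset_diff[OF U(1) assms(1)] .
  then have "(- s) mod N = (sum f (J - U) - sum f J mod N) mod N" using U(2) by (simp add: mod_simps)
  also have "\<dots> = sum f (J - U) mod N" using assms(2) by simp
  finally show ?thesis unfolding subset_sums_def by blast
qed

(* The prefix sums along an enumeration of Q are distinct, since no proper nonempty subset of Q has
   zero sum; the difference of two of them is the sum of a segment or its negative. *)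
lemma prefix_sums_of_minimal_zero_sum:
  assumes "finite Q" "Q \<noteq> {}" "sum f Q mod N = 0"
    and minimal: "\<And>U. U \<subseteq> Q \<Longrightarrow> U \<noteq> {} \<Longrightarrow> U \<noteq> Q \<Longrightarrow> sum f U mod N \<noteq> 0"
  obtains P where "P \<subseteq> {0..<N}" "0 \<in> P" "card P = card Q"
    and "\<And>p p'. p \<in> P \<Longrightarrow> p' \<in> P \<Longrightarrow> (p - p') mod N \<in> subset_sums f Q"
proof -
  obtain xs where xs: "set xs = Q" "distinct xs" using finite_distinct_list[OF assms(1)] by blast
  define U where "U j = set (take j xs)" for j
  define p where "p j = sum f (U j) mod N" for j
  have card_Q: "card Q = length xs" using xs distinct_card by metis
  have U_sub: "U j \<subseteq> Q" for j unfolding U_def using xs(1) set_take_subset by metis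
  have diff_eq: "(p j' - p j) mod N = sum f (U j' - U j) mod N" if "j \<le> j'" for j j'
    unfolding p_def U_def using that by (rule sum_set_take_diff_mod)
  have diff_in: "(p j' - p j) mod N \<in> subset_sums f Q" if "j \<le> j'" for j j'
    using diff_eq[OF that] U_sub unfolding subset_sums_def by blast
  have "inj_on p {0..<length xs}"
  proof (rule linorder_inj_onI')
    fix j j' assume "j \<in> {0..<length xs}" "j' \<in> {0..<length xs}" "j < j'"
    then have "card (U j' - U j) = j' - j" unfolding U_def using xs(2) by (intro card_set_take_diff) auto
    then have "0 < card (U j' - U j)" "card (U j' - U j) < card Q"
      using \<open>j < j'\<close> \<open>j' \<in> {0..<length xs}\<close> card_Q by auto
    then have "U j' - U j \<noteq> {}" "U j' - U j \<noteq> Q" by (metis card.empty less_irrefl)+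
    then have "sum f (U j' - U j) mod N \<noteq> 0" using U_sub by (intro minimal) auto
    then show "p j \<noteq> p j'" using diff_eq[of j j'] \<open>j < j'\<close> by auto
  qed
  show ?thesis
  proof (rule that[of "p ` {0..<length xs}"])
    show "p ` {0..<length xs} \<subseteq> {0..<N}" unfolding p_def using modulus_pos by auto
    show "0 \<in> p ` {0..<length xs}"
      using assms(2) xs(1) unfolding p_def U_def by (intro image_eqI[of _ _ 0]) auto
    show "card (p ` {0..<length xs}) = card Q" using \<open>inj_on p _\<close> card_Q by (simp add: card_image)
  next
    fix q q' assume "q \<in> p ` {0..<length xs}" "q' \<in> p ` {0..<length xs}"
    then obtain j j' where "q = p j" "q' = p j'" by blast
    then show "(q - q') mod N \<in> subset_sums f Q"
    proof (cases "j' \<le> j")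
      case False
      then have "(- ((q' - q) mod N)) mod N \<in> subset_sums f Q"
        using diff_in \<open>q = p j\<close> \<open>q' = p j'\<close> assms(1,3) by (intro uminus_mod_in_subset_sums) auto
      then show ?thesis by (simp add: mod_simps)
    qed (use diff_in in auto)
  qed
qed

lemma card_subset_sums_of_minimal_zero_sum:
  assumes "finite Q" "Q \<noteq> {}" "sum f Q mod N = 0"
    and "\<And>U. U \<subseteq> Q \<Longrightarrow> U \<noteq> {} \<Longrightarrow> U \<noteq> Q \<Longrightarrow> sum f U mod N \<noteq> 0"
    and "M \<notin> subset_sums f Q"
  shows "2 * card Q \<le> card (subset_sums f Q) + 1"
proof -
  obtain P where P: "P \<subseteq> {0..<N}" "0 \<in> P" "card P = card Q"
    and diff: "\<And>p p'. p \<in> P \<Longrightarrow> p' \<in> P \<Longrightarrow> (p - p') mod N \<in> subset_sums f Q"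
    using prefix_sums_of_minimal_zero_sum[OF assms(1-4)] by blast
  define P' where "P' = (\<lambda>p. (- p) mod N) ` P"
  have P': "P' \<subseteq> {0..<N}" "0 \<in> P'" "card P' = card P"
    using P(1,2) modulus_pos inj_on_subset[OF inj_on_uminus_mod P(1)]
    unfolding P'_def by (auto simp: card_image image_iff intro: bexI[of _ 0])
  have "sumset P P' \<subseteq> subset_sums f Q"
    using diff unfolding sumset_def P'_def by (auto simp: mod_simps)
  then have "card P + card P' \<le> card (sumset P P') + 1"
    using P P' \<open>M \<notin> subset_sums f Q\<close> finite_subset[OF P'(1)] by (intro card_sumset_ge) auto
  also have "card (sumset P P') \<le> card (subset_sums f Q)"
    using \<open>sumset P P' \<subseteq> subset_sums f Q\<close> by (rule card_mono[OF finite_subset_sums])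
  finally show ?thesis using P(3) P'(3) by simp
qed

lemma zero_sum_blocks_Un:
  assumes PP: "zero_sum_blocks f J PP" and QQ: "zero_sum_blocks f K QQ" and "J \<inter> K = {}"
  shows "zero_sum_blocks f (J \<union> K) (PP \<union> QQ)" and "PP \<inter> QQ = {}"
proof -
  have across: "disjnt Q Q'" if "Q \<in> PP" "Q' \<in> QQ" for Q Q'
  proof -
    have "Q \<subseteq> J" "Q' \<subseteq> K" using PP QQ that unfolding zero_sum_blocks_def by auto
    with \<open>J \<inter> K = {}\<close> show ?thesis unfolding disjnt_def by blast
  qed
  have "pairwise disjnt (PP \<union> QQ)"
    using PP QQ across unfolding zero_sum_blocks_def pairwise_def
    by (metis Un_iff disjnt_sym)
  then show "zero_sum_blocks f (J \<union> K) (PP \<union> QQ)"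
    using PP QQ unfolding zero_sum_blocks_def by blast
  show "PP \<inter> QQ = {}"
    using PP across unfolding zero_sum_blocks_def by (metis disjnt_self_iff_empty disjoint_iff)
qed

lemma finite_zero_sum_blocks:
  assumes "zero_sum_blocks f J PP" "finite J"
  shows "finite PP"
proof -
  have "PP \<subseteq> Pow J" using assms(1) unfolding zero_sum_blocks_def by simp
  then show ?thesis by (rule finite_subset) (simp add: assms(2))
qed

lemma zero_sum_partition_Un:
  assumes fin: "finite U" "finite V" and disj: "U \<inter> V = {}"
    and M: "M \<notin> subset_sums f (U \<union> V)"
    and PP: "zero_sum_blocks f U PP" "2 * card U + 1 \<le> card (subset_sums f U) + 2 * card PP"
    and QQ: "zero_sum_blocks f V QQ" "2 * card V + 1 \<le> card (subset_sums f V) + 2 * card QQ"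
  shows "2 * card (U \<union> V) + 1 \<le> card (subset_sums f (U \<union> V)) + 2 * card (PP \<union> QQ)"
proof -
  have sums: "subset_sums f (U \<union> V) = sumset (subset_sums f U) (subset_sums f V)"
    by (rule subset_sums_Un[OF fin disj])
  have "card (subset_sums f U) + card (subset_sums f V) \<le> card (subset_sums f (U \<union> V)) + 1"
    unfolding sums
    by (rule card_sumset_ge[OF finite_subset_sums subset_sums_subset subset_sums_subset
          zero_in_subset_sums zero_in_subset_sums])
      (use M sums in simp)
  moreover have "card (PP \<union> QQ) = card PP + card QQ"
    using zero_sum_blocks_Un(2)[OF PP(1) QQ(1) disj]
      finite_zero_sum_blocks[OF PP(1) fin(1)] finite_zero_sum_blocks[OF QQ(1) fin(2)]
    by (simp add: card_Un_disjoint)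
  moreover have "card (U \<union> V) = card U + card V" using fin disj by (simp add: card_Un_disjoint)
  ultimately show ?thesis using PP(2) QQ(2) by simp
qed

lemma zero_sum_partition:
  assumes "finite J" "sum f J mod N = 0" "M \<notin> subset_sums f J"
  shows "\<exists>PP. zero_sum_blocks f J PP \<and> 2 * card J + 1 \<le> card (subset_sums f J) + 2 * card PP"
  using assms
proof (induction "card J" arbitrary: J rule: less_induct)
  case less
  show ?case
  proof (cases "\<forall>U. U \<subseteq> J \<longrightarrow> U \<noteq> {} \<longrightarrow> U \<noteq> J \<longrightarrow> sum f U mod N \<noteq> 0")
    case minimal: True
    show ?thesis
    proof (cases "J = {}")
      case True
      then have "subset_sums f J = {0}" "zero_sum_blocks f J {}"
        by (simp_all add: subset_sums_def zero_sum_blocks_def)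
      with True show ?thesis by (intro exI[of _ "{}"]) simp
    next
      case False
      have "2 * card J \<le> card (subset_sums f J) + 1"
        using less.prems False minimal[rule_format]
        by (intro card_subset_sums_of_minimal_zero_sum)
      moreover have "zero_sum_blocks f J {J}"
        using False less.prems(2) by (simp add: zero_sum_blocks_def)
      ultimately show ?thesis by (intro exI[of _ "{J}"]) simp
    qed
  next
    case False
    then obtain U where U: "U \<subseteq> J" "U \<noteq> {}" "U \<noteq> J" "sum f U mod N = 0" by meson
    define V where "V = J - U"
    have J: "J = U \<union> V" "U \<inter> V = {}" using U(1) unfolding V_def by auto
    have fin: "finite U" "finite V" using less.prems(1) J(1) by simp_all
    have "V \<noteq> {}" using U(1,3) unfolding V_def by blast
    then have "card U < card J" "card V < card J"
      using U(2) fin J by (simp_all add: card_Un_disjoint card_gt_0_iff)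
    have "sum f V mod N = 0"
      unfolding V_def using less.prems(1,2) U(1,4) by (rule sum_Diff_mod_eq_zero)
    have "M \<notin> subset_sums f U" "M \<notin> subset_sums f V"
      using subset_sums_mono[of U J f] subset_sums_mono[of V J f] J(1) less.prems(3) by auto
    obtain PP where PP: "zero_sum_blocks f U PP"
      "2 * card U + 1 \<le> card (subset_sums f U) + 2 * card PP"
      using less.hyps[OF \<open>card U < card J\<close> fin(1) U(4) \<open>M \<notin> subset_sums f U\<close>] by blast
    obtain QQ where QQ: "zero_sum_blocks f V QQ"
      "2 * card V + 1 \<le> card (subset_sums f V) + 2 * card QQ"
      using less.hyps[OF \<open>card V < card J\<close> fin(2) \<open>sum f V mod N = 0\<close> \<open>M \<notin> subset_sums f V\<close>]
      by blast
    have "M \<notin> subset_sums f (U \<union> V)" using less.prems(3) J(1) by simp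
    with zero_sum_blocks_Un(1)[OF PP(1) QQ(1) J(2)] zero_sum_partition_Un[OF fin J(2) _ PP QQ]
    show ?thesis unfolding J(1) by blast
  qed
qed

lemma card_subset_sums_less:
  assumes "M \<in> {0..<N}" "M \<notin> subset_sums f J"
  shows "card (subset_sums f J) < nat N"
proof -
  have "subset_sums f J \<subset> {0..<N}" using assms subset_sums_subset by blast
  then show ?thesis by (metis card_atLeastLessThan_int diff_zero finite_atLeastLessThan_int psubset_card_mono)
qed

lemma M_notin_subset_sums_augmented:
  fixes a :: "nat \<Rightarrow> int"
  assumes M_neg: "(- M) mod N = M"
    and no_M: "\<And>I. I \<subseteq> {1..n} \<Longrightarrow> sum a I mod N \<noteq> M"
  shows "M \<notin> subset_sums (a(0 := - sum a {1..n})) {0..n}"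
proof
  let ?f = "a(0 := - sum a {1..n})"
  assume "M \<in> subset_sums ?f {0..n}"
  then obtain U where U: "U \<subseteq> {0..n}" "sum ?f U mod N = M" unfolding subset_sums_def by auto
  have U': "U - {0} \<subseteq> {1..n}" using U(1) by auto
  have f_U': "sum ?f (U - {0}) = sum a (U - {0})" by (intro sum.cong) auto
  show False
  proof (cases "0 \<in> U")
    case False
    then have "U \<subseteq> {1..n}" using U' by blast
    then show ?thesis using U(2) f_U' no_M \<open>0 \<notin> U\<close> by simp
  next
    case True
    have "sum a {1..n} = sum a ({1..n} - (U - {0})) + sum a (U - {0})"
      using sum.subset_diff[OF U'] by simp
    moreover have "sum ?f U = ?f 0 + sum ?f (U - {0})"
      using True U(1) by (metis finite_atLeastAtMost finite_subset sum.remove)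
    ultimately have "sum ?f U = - sum a ({1..n} - (U - {0}))" using f_U' by simp
    then have "sum a ({1..n} - (U - {0})) mod N = (- M) mod N"
      using U(2) by (metis minus_minus mod_minus_eq)
    then show ?thesis using no_M[of "{1..n} - (U - {0})"] M_neg by simp
  qed
qed

lemma many_zero_sum_blocks:
  fixes a :: "nat \<Rightarrow> int"
  assumes M_neg: "(- M) mod N = M"
    and no_M: "\<And>I. I \<subseteq> {1..n} \<Longrightarrow> sum a I mod N \<noteq> M"
  obtains PP where "zero_sum_blocks a {1..n} PP" "2 * n + 2 \<le> nat N + 2 * card PP"
proof -
  define f where "f = a(0 := - sum a {1..n})"
  have sum_f: "sum f Q = sum a Q" if "0 \<notin> Q" for Q
    using that unfolding f_def by (intro sum.cong) auto
  have "{0..n} = insert 0 {1..n}" by auto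
  then have "sum f {0..n} = f 0 + sum f {1..n}" by simp
  then have "sum f {0..n} = 0" using sum_f[of "{1..n}"] unfolding f_def by simp
  moreover have "M \<notin> subset_sums f {0..n}"
    unfolding f_def using M_notin_subset_sums_augmented[OF assms] .
  ultimately have "\<exists>PP. zero_sum_blocks f {0..n} PP
      \<and> 2 * card {0..n} + 1 \<le> card (subset_sums f {0..n}) + 2 * card PP"
    by (intro zero_sum_partition) simp_all
  then obtain PP where PP: "zero_sum_blocks f {0..n} PP"
    and bound: "2 * card {0..n} + 1 \<le> card (subset_sums f {0..n}) + 2 * card PP"
    by blast
  have "M \<in> {0..<N}" using modulus_pos M_neg by (metis atLeastLessThan_iff pos_mod_bound pos_mod_sign)
  then have card_sums: "card (subset_sums f {0..n}) < nat N"
    using card_subset_sums_less \<open>M \<notin> subset_sums f {0..n}\<close> by blast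
  have "finite PP" using PP by (rule finite_zero_sum_blocks) simp
  moreover have "pairwise disjnt PP" using PP unfolding zero_sum_blocks_def by simp
  ultimately have card_PP: "card PP \<le> Suc (card {Q \<in> PP. 0 \<notin> Q})"
    by (rule card_le_Suc_card_not_containing)
  have blocks: "zero_sum_blocks a {1..n} {Q \<in> PP. 0 \<notin> Q}"
  proof -
    have "Q \<subseteq> {1..n}" if "Q \<subseteq> {0..n}" "0 \<notin> Q" for Q
      using that by (auto simp: subset_iff Suc_le_eq intro: Nat.gr0I)
    moreover have "pairwise disjnt {Q \<in> PP. 0 \<notin> Q}"
      using \<open>pairwise disjnt PP\<close> by (rule pairwise_subset) blast
    ultimately show ?thesis using PP sum_f unfolding zero_sum_blocks_def by auto
  qed
  show ?thesis using bound card_sums card_PP by (intro that[OF blocks]) simp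
qed

end

lemma socle_residue_two_power: "socle_residue (2^(k+1)) (2^k)"
proof
  show "0 < (2::int)^(k+1)" by simp
next
  fix b :: int
  assume "0 < b" "b < 2^(k+1)"
  then show "\<exists>j::nat. (int j * b) mod 2^(k+1) = 2^k" by (rule two_power_multiple_mod_eq)
qed

theorem lemma1p11:
  fixes k x :: nat and a :: "nat \<Rightarrow> int"
  assumes "k \<ge> 1"
  shows "(\<exists>I \<subseteq> {1..2^k + x}.
            (2::int)^k dvd (\<Sum>i\<in>I. a i) \<and> \<not> (2::int)^(k+1) dvd (\<Sum>i\<in>I. a i))
       \<or> (\<exists>A :: nat \<Rightarrow> nat set.
            (\<forall>s\<in>{1..x+1}. A s \<subseteq> {1..2^k + x} \<and> A s \<noteq> {}
                 \<and> (2::int)^(k+1) dvd (\<Sum>i\<in>A s. a i))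
          \<and> (\<forall>s\<in>{1..x+1}. \<forall>t\<in>{1..x+1}. s \<noteq> t \<longrightarrow> A s \<inter> A t = {}))"
proof (cases "\<exists>I \<subseteq> {1..2^k + x}. sum a I mod 2^(k+1) = (2::int)^k")
  case True
  then show ?thesis unfolding mod_two_power_Suc_eq_iff by blast
next
  case False
  interpret socle_residue "2^(k+1)" "2^k" by (rule socle_residue_two_power)
  obtain PP where PP: "zero_sum_blocks a {1..2^k + x} PP"
    and bound: "2 * (2^k + x) + 2 \<le> nat (2^(k+1)) + 2 * card PP"
    using many_zero_sum_blocks[OF neg_two_power_mod] False by blast
  have "nat (2^(k+1)) = (2::nat)^(k+1)" using nat_int[of "2^(k+1)"] by simp
  with bound have "x + 1 \<le> card PP" by simp
  moreover have "finite PP" using PP by (rule finite_zero_sum_blocks) simp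
  moreover have "pairwise disjnt PP" using PP unfolding zero_sum_blocks_def by simp
  ultimately have "\<exists>A. A ` {1..x+1} \<subseteq> PP
      \<and> (\<forall>s\<in>{1..x+1}. \<forall>t\<in>{1..x+1}. s \<noteq> t \<longrightarrow> A s \<inter> A t = {})"
    by (rule ex_disjoint_enumeration)
  then obtain A where A: "A ` {1..x+1} \<subseteq> PP"
    and disjoint: "\<forall>s\<in>{1..x+1}. \<forall>t\<in>{1..x+1}. s \<noteq> t \<longrightarrow> A s \<inter> A t = {}"
    by blast
  show ?thesis
  proof (intro disjI2 exI[of _ A] conjI disjoint ballI)
    fix s assume "s \<in> {1..x+1}"
    then have "A s \<in> PP" using A by blast
    then show "A s \<subseteq> {1..2^k + x}" "A s \<noteq> {}" "(2::int)^(k+1) dvd sum a (A s)"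
      using PP unfolding zero_sum_blocks_def by (auto simp: dvd_eq_mod_eq_0)
  qed
qed

end
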